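(* Let $\sigma$ be a boundedly erasing $k$-block substitution with $w_\epsilon\ne1^k$. Then: (i) $\sigma$ does not satisfy the optimality condition; (ii) there exists $n\in\mathbb N$ such that $f_\sigma^n(x)=0$ for every $x\in\mathbb I$ whose $f_\sigma$-orbit is disjoint from $\mathcal Q_2$.
   Context: Notation: $\mathbb I=[0,1]$. $\mathcal Q_2$ is the set of dyadic rationals in the open interval $(0,1)$. $\{0,1\}^*$ and $\{0,1\}^\omega$ denote finite and infinite binary words, and $\epsilon$ is the empty word. For a word $w$, set $0.w=\sum_iw_i2^{-i}$. For $x\in(0,1]$, $\widetilde x$ is the unique infinite binary expansion of $x$ not ending in $0^\infty$. Fix $k\ge2$. An erasing $k$-block substitution is a map $\sigma:\{0,1\}^k\to\{0,1\}^*$ with exactly one block $w_\epsilon$ such that $\sigma(w_\epsilon)=\epsilon$. $\sigma$ is alternating if there are $\sigma_1,\dots,\sigma_k:\{0,1\}\to\{0,1\}^*$ with $\sigma(b_1\cdots b_k)=\sigma_1(b_1)\cdots\sigma_k(b_k)$. It is then extended to all finite or infinite words by $\sigma(u)=\prod_j\sigma_{((j-1)\bmod k)+1}(u_j)$. $\sigma$ is completely erasing if it is erasing and alternating, and every $w\in\{0,1\}^*$ satisfies $\sigma^n(w)=\epsilon$ for some $n\in\mathbb N$; the least such $n$ is $\epsilon(w)$. $\sigma$ is boundedly erasing if it is completely erasing and $\sup_{w\in\{0,1\}^*}\epsilon(w)<\infty$. The map $f_\sigma:\mathbb I\to\mathbb I$ is defined by $f_\sigma(x)=0.\sigma(\widetilde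 x)$ if $x\in(0,1]$ and $\widetilde x\neq w_\epsilon^\infty$, and $f_\sigma(x)=0$ otherwise. Optimality condition: every $w\in\{0,1\}^\omega$ can be written as $w=\prod_{i\ge1}\sigma(b_i)$ with blocks $b_i\in\{0,1\}^k$ satisfying $\sigma(b_i)\ne\epsilon$. *)

theory Defs
  imports Complex_Main
begin

text \<open>Binary letters are booleans: True = 1, False = 0. Finite words are bool lists,
infinite words are functions nat \<Rightarrow> bool (0-indexed: u 0 is the first letter).
An alternating k-block substitution is given by its components
s j :: bool \<Rightarrow> bool list for j = 0..k-1 (s j corresponds to sigma_(j+1)).\<close>

definition blk_sub :: "nat \<Rightarrow> (nat \<Rightarrow> bool \<Rightarrow> bool list) \<Rightarrow> bool list \<Rightarrow> bool list" where
  "blk_sub k s b = concat (map (\<lambda>j. s j (b ! j)) [0..<k])"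

definition sub_word :: "nat \<Rightarrow> (nat \<Rightarrow> bool \<Rightarrow> bool list) \<Rightarrow> bool list \<Rightarrow> bool list" where
  "sub_word k s u = concat (map (\<lambda>j. s (j mod k) (u ! j)) [0..<length u])"

text \<open>Infinite concatenation of finite words; if the result is finite it is padded with
zeros (which does not change the value 0.w).\<close>
definition inf_concat :: "(nat \<Rightarrow> bool list) \<Rightarrow> nat \<Rightarrow> bool" where
  "inf_concat ws n =
     (if \<exists>m. n < length (concat (map ws [0..<m]))
      then concat (map ws [0..<(LEAST m. n < length (concat (map ws [0..<m])))]) ! n
      else False)"

definition sub_inf :: "nat \<Rightarrow> (nat \<Rightarrow> bool \<Rightarrow> bool list) \<Rightarrow> (nat \<Rightarrow> bool) \<Rightarrow> nat \<Rightarrow> bool" where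
  "sub_inf k s u = inf_concat (\<lambda>j. s (j mod k) (u j))"

definition erasing :: "nat \<Rightarrow> (nat \<Rightarrow> bool \<Rightarrow> bool list) \<Rightarrow> bool" where
  "erasing k s \<longleftrightarrow> (\<exists>!b. length b = k \<and> blk_sub k s b = [])"

definition w_eps :: "nat \<Rightarrow> (nat \<Rightarrow> bool \<Rightarrow> bool list) \<Rightarrow> bool list" where
  "w_eps k s = (THE b. length b = k \<and> blk_sub k s b = [])"

definition completely_erasing :: "nat \<Rightarrow> (nat \<Rightarrow> bool \<Rightarrow> bool list) \<Rightarrow> bool" where
  "completely_erasing k s \<longleftrightarrow> erasing k s \<and> (\<forall>w. \<exists>n. (sub_word k s ^^ n) w = [])"

definition eps_time :: "nat \<Rightarrow> (nat \<Rightarrow> bool \<Rightarrow> bool list) \<Rightarrow> bool list \<Rightarrow> nat" where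
  "eps_time k s w = (LEAST n. (sub_word k s ^^ n) w = [])"

definition boundedly_erasing :: "nat \<Rightarrow> (nat \<Rightarrow> bool \<Rightarrow> bool list) \<Rightarrow> bool" where
  "boundedly_erasing k s \<longleftrightarrow> completely_erasing k s \<and> (\<exists>B. \<forall>w. eps_time k s w \<le> B)"

definition bval :: "(nat \<Rightarrow> bool) \<Rightarrow> real" where
  "bval u = (\<Sum>i. (if u i then 1 else 0) / 2 ^ (i + 1))"

definition bin_exp :: "real \<Rightarrow> nat \<Rightarrow> bool" where
  "bin_exp x = (THE u. (\<forall>n. \<exists>m\<ge>n. u m) \<and> bval u = x)"

definition f_sigma :: "nat \<Rightarrow> (nat \<Rightarrow> bool \<Rightarrow> bool list) \<Rightarrow> real \<Rightarrow> real" where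
  "f_sigma k s x =
     (if 0 < x \<and> x \<le> 1 \<and> bin_exp x \<noteq> (\<lambda>n. w_eps k s ! (n mod k))
      then bval (sub_inf k s (bin_exp x)) else 0)"

definition optimal :: "nat \<Rightarrow> (nat \<Rightarrow> bool \<Rightarrow> bool list) \<Rightarrow> bool" where
  "optimal k s \<longleftrightarrow> (\<forall>w :: nat \<Rightarrow> bool. \<exists>b :: nat \<Rightarrow> bool list.
      (\<forall>i. length (b i) = k \<and> blk_sub k s (b i) \<noteq> []) \<and>
      w = inf_concat (\<lambda>i. blk_sub k s (b i)))"

definition Q2 :: "real set" where
  "Q2 = {x. 0 < x \<and> x < 1 \<and> (\<exists>(a::int) (n::nat). x = a / 2 ^ n)}"

end

theory Submission
  imports Defs "HOL-Library.Infinite_Set"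
begin

text \<open>Bounded erasure yields a single power \<open>\<sigma>\<^sup>B\<close> that erases every finite word.
(i) Under optimality every finite word is a prefix of some \<open>\<sigma>(x)\<close>, hence, by iterating, of
some \<open>\<sigma>\<^sup>B(x)\<close>, which is impossible.
(ii) If the \<open>f\<^sub>\<sigma>\<close>-orbit of \<open>x\<close> avoids the dyadic rationals and \<open>f\<^sub>\<sigma>\<^sup>B(x) \<noteq> 0\<close>, then every
binary expansion along the orbit has infinitely many ones (a word with finitely many ones has a
dyadic value or value 0), and it is the \<open>\<sigma>\<close>-image of the previous expansion. Hence \<open>\<sigma>\<^sup>B\<close> maps
longer and longer prefixes of \<open>x\<close>'s expansion to longer and longer prefixes of a word,
contradicting that \<open>\<sigma>\<^sup>B\<close> erases them.\<close>

lemma concat_map_upt_split: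
  "m \<le> m' \<Longrightarrow> concat (map ws [0..<m']) = concat (map ws [0..<m]) @ concat (map ws [m..<m'])"
  by (metis le_add_diff_inverse upt_add_eq_append zero_le map_append concat_append)

lemma inf_concat_eq_nth:
  assumes "i < length (concat (map ws [0..<m]))"
  shows "inf_concat ws i = concat (map ws [0..<m]) ! i"
proof -
  let ?P = "\<lambda>m. i < length (concat (map ws [0..<m]))"
  define L where "L = (LEAST m. ?P m)"
  have "?P L" unfolding L_def using assms by (rule LeastI)
  moreover have "L \<le> m" unfolding L_def using assms by (rule Least_le)
  ultimately have "concat (map ws [0..<m]) ! i = concat (map ws [0..<L]) ! i"
    by (simp add: concat_map_upt_split[of L m] nth_append)
  moreover have "inf_concat ws i = concat (map ws [0..<L]) ! i"
    unfolding inf_concat_def L_def using assms by auto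
  ultimately show ?thesis by simp
qed

lemma length_concat_unbounded_if_infinite:
  assumes "infinite {i. inf_concat ws i}"
  shows "\<exists>m. L \<le> length (concat (map ws [0..<m]))"
proof (rule ccontr)
  assume "\<not> ?thesis"
  then have "\<not> inf_concat ws i" if "L \<le> i" for i
    using that unfolding inf_concat_def by (auto simp: not_le dest: order.strict_trans)
  then have "{i. inf_concat ws i} \<subseteq> {..<L}" by (auto simp: not_le[symmetric])
  with assms show False using finite_subset by blast
qed

definition is_prefix :: "'a list \<Rightarrow> (nat \<Rightarrow> 'a) \<Rightarrow> bool" where
  "is_prefix w u \<longleftrightarrow> w = map u [0..<length w]"

lemma sub_word_Nil [simp]: "sub_word k s [] = []"
  by (simp add: sub_word_def)

lemma funpow_sub_word_Nil [simp]: "(sub_word k s ^^ n) [] = []"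
  by (induction n) auto

lemma sub_word_map_upt:
  "sub_word k s (map v [0..<m]) = concat (map (\<lambda>j. s (j mod k) (v j)) [0..<m])"
  unfolding sub_word_def by (intro arg_cong[where f=concat] map_cong) auto

lemma sub_word_append:
  "sub_word k s (y @ z) =
     sub_word k s y @ concat (map (\<lambda>j. s ((length y + j) mod k) (z ! j)) [0..<length z])"
proof -
  have indices: "[0..<length (y @ z)] = [0..<length y] @ map (\<lambda>i. i + length y) [0..<length z]"
    using upt_add_eq_append[of 0 "length y" "length z"] map_add_upt[of "length y" "length z"]
    by (simp add: add.commute)
  show ?thesis unfolding sub_word_def indices map_append concat_append map_map
    by (intro arg_cong2[where f="(@)"] arg_cong[where f=concat] map_cong)
       (auto simp: nth_append add.commute)
qed

lemma funpow_sub_word_append: "\<exists>r. (sub_word k s ^^ n) (y @ z) = (sub_word k s ^^ n) y @ r"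
proof (induction n arbitrary: y z)
  case (Suc n)
  obtain r where "(sub_word k s ^^ n) (sub_word k s (y @ z)) = (sub_word k s ^^ n) (sub_word k s y) @ r"
    using Suc.IH sub_word_append by metis
  then show ?case by (auto simp: funpow_Suc_right simp del: funpow.simps)
qed simp

lemma sub_word_concat_blocks:
  assumes "\<forall>i<m. length (b i) = k"
  shows "sub_word k s (concat (map b [0..<m])) = concat (map (\<lambda>i. blk_sub k s (b i)) [0..<m])"
  using assms
proof (induction m)
  case (Suc m)
  have "length (concat (map b [0..<m])) = m * k"
    using Suc.prems by (induction m) auto
  moreover have "length (b m) = k" using Suc.prems by auto
  ultimately have "sub_word k s (concat (map b [0..<m]) @ b m)
      = sub_word k s (concat (map b [0..<m])) @ blk_sub k s (b m)"
    unfolding sub_word_append blk_sub_def by (auto intro!: arg_cong[where f=concat] map_cong)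
  then show ?case using Suc by simp
qed simp

lemma is_prefix_sub_word:
  assumes "is_prefix w v"
  shows "is_prefix (sub_word k s w) (sub_inf k s v)"
proof -
  have "sub_word k s (map v [0..<m]) = map (sub_inf k s v) [0..<length (sub_word k s (map v [0..<m]))]" for m
    by (rule nth_equalityI) (auto simp: sub_inf_def sub_word_map_upt inf_concat_eq_nth)
  then show ?thesis using assms unfolding is_prefix_def by metis
qed

lemma is_prefix_funpow_sub_word:
  "is_prefix w u \<Longrightarrow> is_prefix ((sub_word k s ^^ n) w) ((sub_inf k s ^^ n) u)"
  by (induction n) (auto intro: is_prefix_sub_word)

lemma length_sub_word_unbounded:
  assumes "infinite {i. sub_inf k s v i}"
  shows "\<exists>m. L \<le> length (sub_word k s (map v [0..<m]))"
  using length_concat_unbounded_if_infinite[of _ L] assms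
  by (simp add: sub_inf_def sub_word_map_upt)

lemma length_sub_word_mono:
  "m \<le> m' \<Longrightarrow> length (sub_word k s (map v [0..<m])) \<le> length (sub_word k s (map v [0..<m']))"
  by (simp add: sub_word_map_upt concat_map_upt_split[of m m'])

lemma length_funpow_sub_word_unbounded:
  assumes "\<forall>j<n. infinite {i. (sub_inf k s ^^ Suc j) u i}"
  shows "\<exists>m. L \<le> length ((sub_word k s ^^ n) (map u [0..<m]))"
  using assms
proof (induction n arbitrary: L)
  case 0
  show ?case by (intro exI[of _ L]) simp
next
  case (Suc n)
  let ?v = "(sub_inf k s ^^ n) u"
  obtain m' where m': "L \<le> length (sub_word k s (map ?v [0..<m']))"
    using length_sub_word_unbounded Suc.prems by fastforce
  obtain m where m: "m' \<le> length ((sub_word k s ^^ n) (map u [0..<m]))"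
    using Suc by auto
  define w where "w = (sub_word k s ^^ n) (map u [0..<m])"
  have "w = map ?v [0..<length w]"
    using is_prefix_funpow_sub_word[of "map u [0..<m]" u] unfolding w_def is_prefix_def by simp
  then have "(sub_word k s ^^ Suc n) (map u [0..<m]) = sub_word k s (map ?v [0..<length w])"
    unfolding w_def by (metis funpow.simps(2) o_apply)
  moreover have "L \<le> length (sub_word k s (map ?v [0..<length w]))"
    using m' length_sub_word_mono[OF m[folded w_def]] by (rule order.trans)
  ultimately have "L \<le> length ((sub_word k s ^^ Suc n) (map u [0..<m]))" by simp
  then show ?case by blast
qed

lemma funpow_sub_inf_finite_ones_if_erasing:
  assumes "\<forall>w. (sub_word k s ^^ n) w = []"
  shows "\<exists>j<n. finite {i. (sub_inf k s ^^ Suc j) u i}"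
  using length_funpow_sub_word_unbounded[of n k s u 1] assms by auto

lemma boundedly_erasing_funpow_Nil:
  assumes "boundedly_erasing k s"
  obtains B where "\<forall>w. (sub_word k s ^^ B) w = []"
proof -
  obtain B where B: "\<forall>w. eps_time k s w \<le> B" and ce: "completely_erasing k s"
    using assms unfolding boundedly_erasing_def by blast
  have "\<forall>w. (sub_word k s ^^ B) w = []"
  proof
    fix w
    have "\<exists>n. (sub_word k s ^^ n) w = []" using ce unfolding completely_erasing_def by blast
    then have "(sub_word k s ^^ eps_time k s w) w = []" unfolding eps_time_def by (rule LeastI_ex)
    then have "(sub_word k s ^^ (B - eps_time k s w + eps_time k s w)) w = []"
      by (simp add: funpow_add)
    then show "(sub_word k s ^^ B) w = []" using B by simp
  qed
  then show ?thesis by (rule that)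
qed

lemma optimal_imp_prefix_of_sub_word:
  assumes "optimal k s"
  shows "\<exists>x r. sub_word k s x = v @ r"
proof -
  define M where "M = length v"
  obtain b where b: "\<forall>i. length (b i) = k \<and> blk_sub k s (b i) \<noteq> []"
    and v: "(\<lambda>n. if n < M then v ! n else False) = inf_concat (\<lambda>i. blk_sub k s (b i))"
    using assms unfolding optimal_def by blast
  define C where "C = concat (map (\<lambda>i. blk_sub k s (b i)) [0..<M])"
  have "m \<le> length (concat (map (\<lambda>i. blk_sub k s (b i)) [0..<m]))" for m
  proof (induction m)
    case (Suc m)
    have "0 < length (blk_sub k s (b m))" using b by blast
    then show ?case using Suc by (simp del: length_greater_0_conv)
  qed simp
  then have "M \<le> length C" unfolding C_def .
  have "take M C = v"
  proof (rule nth_equalityI)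
    show "length (take M C) = length v" using \<open>M \<le> length C\<close> M_def by simp
    fix i assume "i < length (take M C)"
    then have "i < M" "i < length C" by auto
    then show "take M C ! i = v ! i"
      using fun_cong[OF v, of i] inf_concat_eq_nth[of i _ M] unfolding C_def by simp
  qed
  then have "C = v @ drop M C" by (metis append_take_drop_id)
  moreover have "sub_word k s (concat (map b [0..<M])) = C"
    unfolding C_def using b by (intro sub_word_concat_blocks) auto
  ultimately show ?thesis by metis
qed

lemma optimal_imp_prefix_of_funpow_sub_word:
  assumes "optimal k s"
  shows "\<exists>x r. (sub_word k s ^^ n) x = v @ r"
proof (induction n arbitrary: v)
  case (Suc n)
  obtain x r where x: "(sub_word k s ^^ n) x = v @ r" using Suc.IH by blast
  obtain y r' where y: "sub_word k s y = x @ r'"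
    using optimal_imp_prefix_of_sub_word[OF assms] by blast
  obtain r'' where "(sub_word k s ^^ n) (x @ r') = (sub_word k s ^^ n) x @ r''"
    using funpow_sub_word_append by blast
  then have "(sub_word k s ^^ Suc n) y = v @ r @ r''"
    using x y by (simp add: funpow_Suc_right del: funpow.simps)
  then show ?case by blast
qed (metis funpow_0)

lemma not_optimal_if_boundedly_erasing:
  assumes "boundedly_erasing k s"
  shows "\<not> optimal k s"
proof
  assume "optimal k s"
  obtain B where "\<forall>w. (sub_word k s ^^ B) w = []"
    using assms by (rule boundedly_erasing_funpow_Nil)
  moreover obtain x r where "(sub_word k s ^^ B) x = [True] @ r"
    using optimal_imp_prefix_of_funpow_sub_word[OF \<open>optimal k s\<close>] by blast
  ultimately show False by simp
qed

definition bval_term :: "(nat \<Rightarrow> bool) \<Rightarrow> nat \<Rightarrow> real" where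
  "bval_term u i = (if u i then 1 else 0) / 2 ^ (i + 1)"

lemma bval_eq_suminf: "bval u = suminf (bval_term u)"
  unfolding bval_def bval_term_def[abs_def] ..

lemma bval_term_nonneg: "0 \<le> bval_term u i"
  by (simp add: bval_term_def)

lemma summable_bval_term: "summable (bval_term u)"
proof (rule summable_comparison_test'[where g="\<lambda>i. (1/2::real)^i" and N=0])
  show "norm (bval_term u i) \<le> (1/2) ^ i" for i
    by (simp add: bval_term_def power_one_over divide_simps)
qed (simp add: summable_geometric)

lemma bval_tail_le: "(\<Sum>n. bval_term v (n + Suc i)) \<le> 1 / 2 ^ (i + 1)"
proof -
  have g: "(\<lambda>n. (1/2::real)^(i+2) * (1/2)^n) sums ((1/2)^(i+2) * (1 / (1 - 1/2)))"
    by (intro sums_mult geometric_sums) simp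
  have "(\<Sum>n. bval_term v (n + Suc i)) \<le> (\<Sum>n. (1/2::real)^(i+2) * (1/2)^n)"
  proof (rule suminf_le)
    show "bval_term v (n + Suc i) \<le> (1/2)^(i+2) * (1/2)^n" for n
      by (simp add: bval_term_def power_one_over power_add[symmetric] divide_simps)
    show "summable (\<lambda>n. bval_term v (n + Suc i))"
      using summable_bval_term summable_ignore_initial_segment by blast
    show "summable (\<lambda>n. (1/2::real)^(i+2) * (1/2)^n)" using g by (rule sums_summable)
  qed
  also have "\<dots> = (1/2)^(i+2) * (1 / (1 - 1/2))" using g by (rule sums_unique[symmetric])
  also have "\<dots> = 1 / 2 ^ (i + 1)" by (simp add: power_one_over)
  finally show ?thesis .
qed

text \<open>The first differing digit decides, provided the larger word does not end in \<open>0\<^sup>\<infinity>\<close>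
(the smaller one may end in \<open>1\<^sup>\<infinity>\<close>).\<close>

lemma bval_less:
  assumes "infinite {j. u j}" and "\<forall>j<i. u j = v j" and "u i" and "\<not> v i"
  shows "bval v < bval u"
proof -
  have split: "bval w = (\<Sum>n. bval_term w (n + Suc i)) + (\<Sum>j<Suc i. bval_term w j)" for w
    unfolding bval_eq_suminf by (rule suminf_split_initial_segment[OF summable_bval_term])
  have prefix: "(\<Sum>j<i. bval_term u j) = (\<Sum>j<i. bval_term v j)"
    using assms(2) by (intro sum.cong) (auto simp: bval_term_def)
  obtain m where m: "Suc i \<le> m" "u m"
    using assms(1) unfolding infinite_nat_iff_unbounded_le by auto
  have "0 < (\<Sum>n. bval_term u (n + Suc i))"
  proof (rule suminf_pos2[where i="m - Suc i"])
    show "summable (\<lambda>n. bval_term u (n + Suc i))"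
      using summable_bval_term summable_ignore_initial_segment by blast
    show "0 \<le> bval_term u (n + Suc i)" for n by (rule bval_term_nonneg)
    show "0 < bval_term u (m - Suc i + Suc i)" using m by (simp add: bval_term_def)
  qed
  moreover have "bval v \<le> 1 / 2 ^ (i + 1) + (\<Sum>j<i. bval_term v j)"
    using split[of v] bval_tail_le[of v i] assms(4) by (simp add: bval_term_def)
  ultimately show ?thesis using split[of u] prefix assms(3) by (simp add: bval_term_def)
qed

lemma bval_inj:
  assumes "infinite {i. u i}" "infinite {i. v i}" "bval u = bval v"
  shows "u = v"
proof (rule ccontr)
  assume "u \<noteq> v"
  then have ex: "\<exists>i. u i \<noteq> v i" by auto
  define i where "i = (LEAST i. u i \<noteq> v i)"
  have "u i \<noteq> v i" unfolding i_def using ex by (rule LeastI_ex)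
  moreover have "\<forall>j<i. u j = v j" unfolding i_def using not_less_Least by blast
  ultimately have "bval v < bval u \<or> bval u < bval v"
    using bval_less[OF assms(1)] bval_less[OF assms(2), of i u] by (cases "u i") auto
  with assms(3) show False by simp
qed

lemma bin_exp_bval:
  assumes "infinite {i. v i}"
  shows "bin_exp (bval v) = v"
  unfolding bin_exp_def
proof (rule the_equality)
  show "(\<forall>n. \<exists>m\<ge>n. v m) \<and> bval v = bval v"
    using assms by (simp add: infinite_nat_iff_unbounded_le)
  show "u = v" if "(\<forall>n. \<exists>m\<ge>n. u m) \<and> bval u = bval v" for u
    using that assms by (intro bval_inj) (auto simp: infinite_nat_iff_unbounded_le)
qed

lemma bval_dyadic_if_finite:
  assumes "finite {i. v i}"
  shows "bval v = 0 \<or> bval v \<in> Q2"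
proof -
  obtain N where N: "\<forall>m\<ge>N. \<not> v m"
    using assms unfolding finite_nat_set_iff_bounded_le by (metis Suc_le_eq mem_Collect_eq not_le)
  have b: "bval v = (\<Sum>i<N. bval_term v i)" unfolding bval_eq_suminf
    by (rule suminf_finite) (use N in \<open>auto simp: bval_term_def\<close>)
  have "0 \<le> bval v" unfolding b by (intro sum_nonneg bval_term_nonneg)
  have "bval v \<le> (\<Sum>i<N. 1 / (2::real) ^ (i + 1))"
    unfolding b by (intro sum_mono) (simp add: bval_term_def)
  also have "\<dots> = 1 - 1 / 2 ^ N" by (induction N) (simp_all add: field_simps)
  also have "\<dots> < 1" by simp
  finally have "bval v < 1" .
  define a where "a = (\<Sum>i<N. if v i then (2::int) ^ (N - (i + 1)) else 0)"
  have "bval_term v i = (if v i then 2 ^ (N - (i + 1)) else 0) / (2::real) ^ N" if "i < N" for i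
  proof -
    have "N = (N - (i + 1)) + (i + 1)" using that by simp
    then have "(2::real) ^ N = 2 ^ (N - (i + 1)) * 2 ^ (i + 1)" by (metis power_add)
    then show ?thesis by (simp add: bval_term_def)
  qed
  then have "bval v = real_of_int a / 2 ^ N"
    unfolding b a_def by (simp add: sum_divide_distrib if_distrib cong: if_cong)
  with \<open>0 \<le> bval v\<close> \<open>bval v < 1\<close> show ?thesis unfolding Q2_def by (auto simp: less_eq_real_def)
qed

lemma f_sigma_zero [simp]: "f_sigma k s 0 = 0"
  by (simp add: f_sigma_def)

lemma funpow_f_sigma_zero: "(f_sigma k s ^^ m) x = 0 \<Longrightarrow> (f_sigma k s ^^ (d + m)) x = 0"
  by (induction d) auto

lemma bin_exp_f_sigma:
  assumes "f_sigma k s x \<noteq> 0" and "f_sigma k s x \<notin> Q2"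
  shows "infinite {i. sub_inf k s (bin_exp x) i}"
    and "bin_exp (f_sigma k s x) = sub_inf k s (bin_exp x)"
proof -
  have f: "f_sigma k s x = bval (sub_inf k s (bin_exp x))"
    using assms(1) unfolding f_sigma_def by (auto split: if_splits)
  show "infinite {i. sub_inf k s (bin_exp x) i}"
    using bval_dyadic_if_finite assms f by metis
  then show "bin_exp (f_sigma k s x) = sub_inf k s (bin_exp x)"
    unfolding f by (rule bin_exp_bval)
qed

lemma funpow_f_sigma_eq_zero:
  assumes "\<forall>w. (sub_word k s ^^ B) w = []"
    and "\<forall>m. (f_sigma k s ^^ m) x \<notin> Q2"
  shows "(f_sigma k s ^^ B) x = 0"
proof (rule ccontr)
  let ?x = "\<lambda>m. (f_sigma k s ^^ m) x"
  assume "?x B \<noteq> 0"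
  then have nonzero: "?x m \<noteq> 0" if "m \<le> B" for m
    using funpow_f_sigma_zero[where d="B - m" and m=m] that by auto
  have bin_exp_orbit: "bin_exp (?x m) = (sub_inf k s ^^ m) (bin_exp x)" if "m \<le> B" for m
    using that
  proof (induction m)
    case (Suc m)
    have "f_sigma k s (?x m) \<noteq> 0" "f_sigma k s (?x m) \<notin> Q2"
      using nonzero[OF Suc.prems] assms(2)[rule_format, of "Suc m"] by simp_all
    then show ?case using bin_exp_f_sigma(2)[of k s "?x m"] Suc by simp
  qed simp
  have "infinite {i. (sub_inf k s ^^ Suc j) (bin_exp x) i}" if "j < B" for j
  proof -
    have "f_sigma k s (?x j) \<noteq> 0" "f_sigma k s (?x j) \<notin> Q2"
      using nonzero[of "Suc j"] assms(2)[rule_format, of "Suc j"] that by simp_all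
    then show ?thesis using bin_exp_f_sigma(1)[of k s "?x j"] bin_exp_orbit[of j] that by simp
  qed
  then show False using funpow_sub_inf_finite_ones_if_erasing[OF assms(1)] by blast
qed

theorem lemma4p1:
  fixes k :: nat and s :: "nat \<Rightarrow> bool \<Rightarrow> bool list"
  assumes "k \<ge> 2"
    and "boundedly_erasing k s"
    and "w_eps k s \<noteq> replicate k True"
  shows "\<not> optimal k s \<and>
    (\<exists>n. \<forall>x \<in> {0..1}. (\<forall>m. (f_sigma k s ^^ m) x \<notin> Q2) \<longrightarrow> (f_sigma k s ^^ n) x = 0)"
proof
  show "\<not> optimal k s"
    using assms(2) by (rule not_optimal_if_boundedly_erasing)
  obtain B where "\<forall>w. (sub_word k s ^^ B) w = []"
    using assms(2) by (rule boundedly_erasing_funpow_Nil)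
  then show "\<exists>n. \<forall>x \<in> {0..1}. (\<forall>m. (f_sigma k s ^^ m) x \<notin> Q2) \<longrightarrow> (f_sigma k s ^^ n) x = 0"
    using funpow_f_sigma_eq_zero by blast
qed

end
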